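(* Let $P\ge1$, $\nu>0$, $\mathbf{g}\in\mathbb{R}^P$, and let $\mathbf{v}\in\mathbb{R}^P$ have i.i.d. entries $v[p]\sim\mathcal{N}(0,\nu^2)$. Let $\theta_0=\|\mathbf{g}\|^2/(P\nu^2)$ and suppose $0\le\theta_{\min}\le\theta_0\le\theta_{\max}$. Then for any $\tau_1\ge\nu^2(1+\theta_{\max})$ and any $\tau_2\le\nu^2(1+\theta_{\min})$, $$\mathbb{P}\Big[\tfrac1P\|\mathbf{g}+\mathbf{v}\|^2\ge\tau_1\Big]\le\exp\Big(-\tfrac P4\big(\sqrt{2\tau_1/\nu^2-1}-\sqrt{1+2\theta_{\max}}\big)^2\Big),$$ $$\mathbb{P}\Big[\tfrac1P\|\mathbf{g}+\mathbf{v}\|^2\le\tau_2\Big]\le\exp\Big(-\tfrac P4\,\frac{(1+\theta_{\min}-\tau_2/\nu^2)^2}{1+2\theta_{\min}}\Big).$$ *)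

theory Defs
  imports "HOL-Probability.Probability"
begin

end

(*
  Chernoff's method. Completing the square in the Gaussian integral shows that for v ~ N(0, nu^2)
  and 1 - 2 s nu^2 > 0 the moment generating function of (g + v)^2 at s is
  exp (s g^2 / (1 - 2 s nu^2)) / sqrt (1 - 2 s nu^2); by independence that of ||g + v||^2 is the
  product over the coordinates. With mu = s nu^2, Markov's inequality bounds either tail by
  exp (P L(mu)) for an explicit exponent L, which is increasing in theta0 for mu >= 0 and
  decreasing for mu <= 0, so theta0 may be replaced by theta_max resp. theta_min. The stated rates
  are L at explicit choices of mu, estimated with ln r <= (r - 1/r)/2 and ln (1 + x) >= x - x^2/2.
*)
theory Submission
  imports Defs
begin

lemma normal_density_mult_exp_square:
  fixes \<sigma> s g x :: real
  defines "k \<equiv> 1 - 2 * s * \<sigma>\<^sup>2"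
  assumes "\<sigma> > 0" and "k > 0"
  shows "normal_density 0 \<sigma> x * exp (s * (g + x)\<^sup>2) =
    exp (s * g\<^sup>2 / k) / sqrt k * normal_density (2 * s * g * \<sigma>\<^sup>2 / k) (\<sigma> / sqrt k) x"
proof -
  define m where "m = 2 * s * g * \<sigma>\<^sup>2 / k"
  have k: "k = 1 - 2 * s * \<sigma>\<^sup>2" "k \<noteq> 0" "(\<sigma> / sqrt k)\<^sup>2 = \<sigma>\<^sup>2 / k"
    using assms by (simp_all add: power_divide)
  have square: "s * (g + x)\<^sup>2 - x\<^sup>2 / (2 * \<sigma>\<^sup>2) = s * g\<^sup>2 / k - (x - m)\<^sup>2 / (2 * (\<sigma> / sqrt k)\<^sup>2)"
    using assms(2) k unfolding m_def by (simp add: field_simps power2_eq_square) algebra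
  then have exponent: "exp (- (x - 0)\<^sup>2 / (2 * \<sigma>\<^sup>2)) * exp (s * (g + x)\<^sup>2) =
      exp (s * g\<^sup>2 / k) * exp (- (x - m)\<^sup>2 / (2 * (\<sigma> / sqrt k)\<^sup>2))"
    by (simp flip: exp_add)
  have scale: "sqrt (2 * (pi * \<sigma>\<^sup>2)) = sqrt k * sqrt (2 * (pi * (\<sigma> / sqrt k)\<^sup>2))"
    using assms by (simp add: power_divide real_sqrt_mult real_sqrt_divide)
  show ?thesis
    unfolding normal_density_def mult.assoc exponent by (simp add: scale m_def mult.assoc)
qed

lemma normal_exp_square_moment:
  fixes X :: "'a \<Rightarrow> real" and \<sigma> s g :: real
  defines "k \<equiv> 1 - 2 * s * \<sigma>\<^sup>2"
  assumes X: "distributed M lborel X (normal_density 0 \<sigma>)" and "\<sigma> > 0" and "k > 0"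
  shows "integrable M (\<lambda>\<omega>. exp (s * (g + X \<omega>)\<^sup>2))"
    and "(\<integral>\<omega>. exp (s * (g + X \<omega>)\<^sup>2) \<partial>M) = exp (s * g\<^sup>2 / k) / sqrt k"
proof -
  have [measurable]: "(\<lambda>x. exp (s * (g + x)\<^sup>2)) \<in> borel_measurable lborel"
    by measurable
  note density = normal_density_mult_exp_square[of \<sigma> s, folded k_def, OF \<open>\<sigma> > 0\<close> \<open>k > 0\<close>]
  have "integrable lborel (\<lambda>x. normal_density 0 \<sigma> x * exp (s * (g + x)\<^sup>2))"
    unfolding density using \<open>\<sigma> > 0\<close> \<open>k > 0\<close>
    by (intro integrable_mult_right integrable_normal_density) simp
  then show "integrable M (\<lambda>\<omega>. exp (s * (g + X \<omega>)\<^sup>2))"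
    using distributed_integrable[OF X] by simp
  have "(\<integral>\<omega>. exp (s * (g + X \<omega>)\<^sup>2) \<partial>M) =
      (\<integral>x. normal_density 0 \<sigma> x * exp (s * (g + x)\<^sup>2) \<partial>lborel)"
    using distributed_integral[OF X] by simp
  also have "\<dots> = exp (s * g\<^sup>2 / k) / sqrt k"
    unfolding density using \<open>\<sigma> > 0\<close> \<open>k > 0\<close> by simp
  finally show "(\<integral>\<omega>. exp (s * (g + X \<omega>)\<^sup>2) \<partial>M) = exp (s * g\<^sup>2 / k) / sqrt k" .
qed

lemma (in prob_space) normal_exp_sum_squares_moment:
  fixes v :: "'a \<Rightarrow> nat \<Rightarrow> real" and g :: "nat \<Rightarrow> real" and \<sigma> s :: real
  defines "k \<equiv> 1 - 2 * s * \<sigma>\<^sup>2"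
  assumes indep: "indep_vars (\<lambda>_. borel) (\<lambda>p x. v x p) {..<P}"
    and normal: "\<And>p. p < P \<Longrightarrow> distributed M lborel (\<lambda>x. v x p) (normal_density 0 \<sigma>)"
    and "\<sigma> > 0" and "k > 0"
  shows "integrable M (\<lambda>x. exp (s * (\<Sum>p<P. (g p + v x p)\<^sup>2)))"
    and "(\<integral>x. exp (s * (\<Sum>p<P. (g p + v x p)\<^sup>2)) \<partial>M) = exp (s * (\<Sum>p<P. (g p)\<^sup>2) / k) / sqrt k ^ P"
proof -
  have product: "(\<lambda>x. exp (s * (\<Sum>p<P. (g p + v x p)\<^sup>2))) = (\<lambda>x. \<Prod>p<P. exp (s * (g p + v x p)\<^sup>2))"
    by (simp add: sum_distrib_left exp_sum)
  have indep_factors: "indep_vars (\<lambda>_. borel) (\<lambda>p x. exp (s * (g p + v x p)\<^sup>2)) {..<P}"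
    using indep_vars_compose2[OF indep, where Y="\<lambda>p t. exp (s * (g p + t)\<^sup>2)" and N="\<lambda>_. borel"]
    by simp
  have factor: "integrable M (\<lambda>x. exp (s * (g p + v x p)\<^sup>2))"
    "(\<integral>x. exp (s * (g p + v x p)\<^sup>2) \<partial>M) = exp (s * (g p)\<^sup>2 / k) / sqrt k" if "p < P" for p
    using normal_exp_square_moment[of M _ \<sigma> s, folded k_def, OF normal[OF that] \<open>\<sigma> > 0\<close> \<open>k > 0\<close>]
    by auto
  show "integrable M (\<lambda>x. exp (s * (\<Sum>p<P. (g p + v x p)\<^sup>2)))"
    unfolding product by (rule indep_vars_integrable[OF _ indep_factors]) (auto intro: factor)
  have "(\<integral>x. exp (s * (\<Sum>p<P. (g p + v x p)\<^sup>2)) \<partial>M) =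
      (\<Prod>p<P. \<integral>x. exp (s * (g p + v x p)\<^sup>2) \<partial>M)"
    unfolding product by (rule indep_vars_lebesgue_integral[OF _ indep_factors]) (auto intro: factor)
  also have "\<dots> = (\<Prod>p<P. exp (s * (g p)\<^sup>2 / k) / sqrt k)"
    by (intro prod.cong) (auto simp: factor)
  also have "\<dots> = exp (s * (\<Sum>p<P. (g p)\<^sup>2) / k) / sqrt k ^ P"
    by (simp add: prod_dividef exp_sum[symmetric] sum_distrib_left sum_divide_distrib)
  finally show "(\<integral>x. exp (s * (\<Sum>p<P. (g p + v x p)\<^sup>2)) \<partial>M) =
      exp (s * (\<Sum>p<P. (g p)\<^sup>2) / k) / sqrt k ^ P" .
qed

lemma (in finite_measure) measure_le_exp_moment:
  fixes f :: "'a \<Rightarrow> real"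
  assumes "A \<in> sets M" and "integrable M (\<lambda>x. exp (s * f x))" and "\<And>x. x \<in> A \<Longrightarrow> s * c \<le> s * f x"
  shows "measure M A \<le> exp (- s * c) * (\<integral>x. exp (s * f x) \<partial>M)"
proof -
  have "A \<subseteq> {x \<in> space M. 1 \<le> exp (- s * c) * exp (s * f x)}"
    using assms(3) sets.sets_into_space[OF assms(1)] by (auto simp flip: exp_add)
  then have "measure M A \<le> measure M {x \<in> space M. 1 \<le> exp (- s * c) * exp (s * f x)}"
    using assms(2) by (intro finite_measure_mono) auto
  also have "\<dots> \<le> (\<integral>x. exp (- s * c) * exp (s * f x) \<partial>M) / 1"
    using assms by (intro integral_Markov_inequality_measure) auto
  finally show ?thesis
    by simp
qed

text \<open>For \<open>\<mu> < 1/2\<close>, \<open>\<mu> \<theta> / (1 - 2 \<mu>) - ln (1 - 2 \<mu>) / 2\<close> is the logarithmic moment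
  generating function at \<open>\<mu>\<close> of \<open>(h + Z)\<^sup>2\<close>, \<open>Z\<close> standard normal, \<open>h\<^sup>2 = \<theta>\<close>; subtracting
  \<open>\<mu> t\<close> gives the Chernoff exponent of the threshold \<open>t\<close> per coordinate.\<close>

definition chi2_chernoff_exponent :: "real \<Rightarrow> real \<Rightarrow> real \<Rightarrow> real" where
  "chi2_chernoff_exponent \<theta> t \<mu> = \<mu> * \<theta> / (1 - 2 * \<mu>) - ln (1 - 2 * \<mu>) / 2 - \<mu> * t"

lemma (in prob_space) measure_le_exp_chi2_chernoff_exponent:
  fixes v :: "'a \<Rightarrow> nat \<Rightarrow> real" and g :: "nat \<Rightarrow> real" and P :: nat and \<sigma> \<mu> t :: real
  defines "\<theta> \<equiv> (\<Sum>p<P. (g p)\<^sup>2) / (real P * \<sigma>\<^sup>2)"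
  assumes indep: "indep_vars (\<lambda>_. borel) (\<lambda>p x. v x p) {..<P}"
    and normal: "\<And>p. p < P \<Longrightarrow> distributed M lborel (\<lambda>x. v x p) (normal_density 0 \<sigma>)"
    and "\<sigma> > 0" and "P > 0" and "\<mu> < 1/2" and "A \<in> sets M"
    and tail: "\<And>x. x \<in> A \<Longrightarrow> \<mu> * (real P * \<sigma>\<^sup>2 * t) \<le> \<mu> * (\<Sum>p<P. (g p + v x p)\<^sup>2)"
  shows "measure M A \<le> exp (real P * chi2_chernoff_exponent \<theta> t \<mu>)"
proof -
  define s where "s = \<mu> / \<sigma>\<^sup>2"
  define k where "k = 1 - 2 * \<mu>"
  have k: "k > 0" "1 - 2 * s * \<sigma>\<^sup>2 = k"
    using \<open>\<mu> < 1/2\<close> \<open>\<sigma> > 0\<close> by (simp_all add: s_def k_def)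
  note moment = normal_exp_sum_squares_moment[of v P \<sigma> s g, unfolded k(2), OF indep normal \<open>\<sigma> > 0\<close> k(1)]
  have "measure M A \<le>
      exp (- s * (real P * \<sigma>\<^sup>2 * t)) * (\<integral>x. exp (s * (\<Sum>p<P. (g p + v x p)\<^sup>2)) \<partial>M)"
  proof (rule measure_le_exp_moment[OF \<open>A \<in> sets M\<close> moment(1)])
    fix x assume "x \<in> A"
    from divide_right_mono[OF tail[OF this], of "\<sigma>\<^sup>2"]
    show "s * (real P * \<sigma>\<^sup>2 * t) \<le> s * (\<Sum>p<P. (g p + v x p)\<^sup>2)"
      by (simp add: s_def)
  qed
  also have "\<dots> = exp (- s * (real P * \<sigma>\<^sup>2 * t)) *
      (exp (s * (real P * \<sigma>\<^sup>2 * \<theta>) / k) / exp (real P * (ln k / 2)))"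
    using \<open>\<sigma> > 0\<close> \<open>P > 0\<close> k(1)
    by (simp add: moment(2) \<theta>_def exp_of_nat_mult exp_divide_power_eq ln_sqrt[symmetric])
  also have "\<dots> = exp (real P * chi2_chernoff_exponent \<theta> t \<mu>)"
    using \<open>\<sigma> > 0\<close> \<open>\<mu> < 1/2\<close>
    by (simp add: chi2_chernoff_exponent_def s_def k_def exp_add[symmetric] exp_diff[symmetric] field_simps)
  finally show ?thesis .
qed

lemma (in prob_space) upper_tail_le_exp_chi2_chernoff_exponent:
  fixes v :: "'a \<Rightarrow> nat \<Rightarrow> real" and g :: "nat \<Rightarrow> real" and P :: nat and \<sigma> \<mu> \<tau> :: real
  defines "\<theta> \<equiv> (\<Sum>p<P. (g p)\<^sup>2) / (real P * \<sigma>\<^sup>2)"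
  assumes "indep_vars (\<lambda>_. borel) (\<lambda>p x. v x p) {..<P}"
    and normal: "\<And>p. p < P \<Longrightarrow> distributed M lborel (\<lambda>x. v x p) (normal_density 0 \<sigma>)"
    and "\<sigma> > 0" and "P > 0" and "0 \<le> \<mu>" and "\<mu> < 1/2"
  shows "measure M {x \<in> space M. \<tau> \<le> (\<Sum>p<P. (g p + v x p)\<^sup>2) / real P}
    \<le> exp (real P * chi2_chernoff_exponent \<theta> (\<tau> / \<sigma>\<^sup>2) \<mu>)"
  unfolding \<theta>_def
proof (rule measure_le_exp_chi2_chernoff_exponent)
  have "(\<lambda>x. v x p) \<in> borel_measurable M" if "p < P" for p
    using distributed_measurable[OF normal[OF that]] by simp
  then show "{x \<in> space M. \<tau> \<le> (\<Sum>p<P. (g p + v x p)\<^sup>2) / real P} \<in> sets M"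
    by measurable
  fix x assume "x \<in> {x \<in> space M. \<tau> \<le> (\<Sum>p<P. (g p + v x p)\<^sup>2) / real P}"
  then have "real P * \<sigma>\<^sup>2 * (\<tau> / \<sigma>\<^sup>2) \<le> (\<Sum>p<P. (g p + v x p)\<^sup>2)"
    using \<open>\<sigma> > 0\<close> \<open>P > 0\<close> by (simp add: field_simps)
  then show "\<mu> * (real P * \<sigma>\<^sup>2 * (\<tau> / \<sigma>\<^sup>2)) \<le> \<mu> * (\<Sum>p<P. (g p + v x p)\<^sup>2)"
    using \<open>0 \<le> \<mu>\<close> by (rule mult_left_mono)
qed fact+

lemma (in prob_space) lower_tail_le_exp_chi2_chernoff_exponent:
  fixes v :: "'a \<Rightarrow> nat \<Rightarrow> real" and g :: "nat \<Rightarrow> real" and P :: nat and \<sigma> \<mu> \<tau> :: real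
  defines "\<theta> \<equiv> (\<Sum>p<P. (g p)\<^sup>2) / (real P * \<sigma>\<^sup>2)"
  assumes "indep_vars (\<lambda>_. borel) (\<lambda>p x. v x p) {..<P}"
    and normal: "\<And>p. p < P \<Longrightarrow> distributed M lborel (\<lambda>x. v x p) (normal_density 0 \<sigma>)"
    and "\<sigma> > 0" and "P > 0" and "\<mu> \<le> 0"
  shows "measure M {x \<in> space M. (\<Sum>p<P. (g p + v x p)\<^sup>2) / real P \<le> \<tau>}
    \<le> exp (real P * chi2_chernoff_exponent \<theta> (\<tau> / \<sigma>\<^sup>2) \<mu>)"
  unfolding \<theta>_def
proof (rule measure_le_exp_chi2_chernoff_exponent)
  have "(\<lambda>x. v x p) \<in> borel_measurable M" if "p < P" for p
    using distributed_measurable[OF normal[OF that]] by simp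
  then show "{x \<in> space M. (\<Sum>p<P. (g p + v x p)\<^sup>2) / real P \<le> \<tau>} \<in> sets M"
    by measurable
  fix x assume "x \<in> {x \<in> space M. (\<Sum>p<P. (g p + v x p)\<^sup>2) / real P \<le> \<tau>}"
  then have "(\<Sum>p<P. (g p + v x p)\<^sup>2) \<le> real P * \<sigma>\<^sup>2 * (\<tau> / \<sigma>\<^sup>2)"
    using \<open>\<sigma> > 0\<close> \<open>P > 0\<close> by (simp add: field_simps)
  then show "\<mu> * (real P * \<sigma>\<^sup>2 * (\<tau> / \<sigma>\<^sup>2)) \<le> \<mu> * (\<Sum>p<P. (g p + v x p)\<^sup>2)"
    using \<open>\<mu> \<le> 0\<close> by (rule mult_left_mono_neg)
qed (fact+, use \<open>\<mu> \<le> 0\<close> in simp)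

lemma ln_le_half_diff_inverse:
  fixes r :: real
  assumes "1 \<le> r"
  shows "ln r \<le> (r - 1 / r) / 2"
proof -
  let ?f = "\<lambda>y::real. (y - 1 / y) / 2 - ln y"
  have "?f 1 \<le> ?f r"
  proof (rule DERIV_nonneg_imp_nondecreasing[OF assms])
    fix y :: real assume "1 \<le> y"
    then have "(?f has_real_derivative (1 - 1 / y)\<^sup>2 / 2) (at y)"
      by (auto intro!: derivative_eq_intros simp: field_simps power2_eq_square)
    then show "\<exists>d. (?f has_real_derivative d) (at y) \<and> 0 \<le> d"
      by auto
  qed
  then show ?thesis
    by simp
qed

lemma ln_add_one_ge_sub_half_square:
  fixes x :: real
  assumes "0 \<le> x"
  shows "x - x\<^sup>2 / 2 \<le> ln (1 + x)"
proof -
  let ?f = "\<lambda>y::real. ln (1 + y) - y + y\<^sup>2 / 2"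
  have "?f 0 \<le> ?f x"
  proof (rule DERIV_nonneg_imp_nondecreasing[OF assms])
    fix y :: real assume "0 \<le> y"
    then have "(?f has_real_derivative y\<^sup>2 / (1 + y)) (at y)"
      by (auto intro!: derivative_eq_intros simp: field_simps power2_eq_square)
    then show "\<exists>d. (?f has_real_derivative d) (at y) \<and> 0 \<le> d"
      using \<open>0 \<le> y\<close> by auto
  qed
  then show ?thesis
    by simp
qed

lemma chi2_chernoff_exponent_upper_bound:
  fixes \<theta> \<theta>max t :: real
  assumes "0 \<le> \<theta>" and "\<theta> \<le> \<theta>max" and "1 + \<theta>max \<le> t"
  shows "\<exists>\<mu>. 0 \<le> \<mu> \<and> \<mu> < 1/2 \<and>
    chi2_chernoff_exponent \<theta> t \<mu> \<le> - (sqrt (2 * t - 1) - sqrt (1 + 2 * \<theta>max))\<^sup>2 / 4"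
proof -
  define a where "a = sqrt (2 * t - 1)"
  define b where "b = sqrt (1 + 2 * \<theta>max)"
  define \<mu> where "\<mu> = (a - b) / (2 * a)"
  have "1 \<le> b" "b \<le> a"
    using assms by (simp_all add: a_def b_def)
  have t: "t = (a\<^sup>2 + 1) / 2" and \<theta>max: "\<theta>max = (b\<^sup>2 - 1) / 2"
    using assms by (simp_all add: a_def b_def)
  have "0 \<le> \<mu>" "\<mu> < 1/2" "1 - 2 * \<mu> = b / a"
    using \<open>1 \<le> b\<close> \<open>b \<le> a\<close> by (simp_all add: \<mu>_def field_simps)
  have "\<mu> * \<theta> / (b / a) \<le> \<mu> * \<theta>max * (a / b)"
    using \<open>0 \<le> \<mu>\<close> \<open>1 \<le> b\<close> \<open>b \<le> a\<close> assms(2)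
    by (simp add: mult_left_mono mult_right_mono divide_right_mono)
  moreover have "- ln (b / a) \<le> (a / b - b / a) / 2"
    using ln_le_half_diff_inverse[of "a / b"] \<open>1 \<le> b\<close> \<open>b \<le> a\<close> by (simp add: ln_div)
  ultimately have "chi2_chernoff_exponent \<theta> t \<mu> \<le> \<mu> * \<theta>max * (a / b) + (a / b - b / a) / 4 - \<mu> * t"
    unfolding chi2_chernoff_exponent_def \<open>1 - 2 * \<mu> = b / a\<close> by argo
  also have "\<dots> = - (a - b)\<^sup>2 / 4"
    using \<open>1 \<le> b\<close> \<open>b \<le> a\<close> unfolding t \<theta>max \<mu>_def by (simp add: field_simps power2_eq_square)
  finally show ?thesis
    using \<open>0 \<le> \<mu>\<close> \<open>\<mu> < 1/2\<close> unfolding a_def b_def by blast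
qed

lemma chi2_chernoff_exponent_lower_bound:
  fixes \<theta> \<theta>min t :: real
  assumes "0 \<le> \<theta>min" and "\<theta>min \<le> \<theta>" and "t \<le> 1 + \<theta>min"
  shows "\<exists>\<mu> \<le> 0. chi2_chernoff_exponent \<theta> t \<mu> \<le> - ((1 + \<theta>min - t)\<^sup>2 / (1 + 2 * \<theta>min)) / 4"
proof -
  define c where "c = 1 + \<theta>min - t"
  define w where "w = 1 + 2 * \<theta>min"
  define u where "u = c / (2 * w)" \<comment> \<open>minimises \<open>- u c + u\<^sup>2 w\<close>, the bound on the exponent at \<open>- u\<close>\<close>
  have "0 \<le> c" "1 \<le> w" "0 \<le> u"
    using assms by (simp_all add: c_def w_def u_def)
  have "- (u * \<theta> / (1 + 2 * u)) \<le> - (u * \<theta>min * (1 - 2 * u))"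
  proof -
    have "u * \<theta>min * (1 - 2 * u) * (1 + 2 * u) = u * \<theta>min - 4 * u ^ 3 * \<theta>min"
      by (simp add: algebra_simps power3_eq_cube)
    also have "\<dots> \<le> u * \<theta>"
      using \<open>0 \<le> u\<close> assms(1) mult_left_mono[OF assms(2) \<open>0 \<le> u\<close>]
      by (smt (verit) mult_nonneg_nonneg zero_le_power)
    finally have "u * \<theta>min * (1 - 2 * u) * (1 + 2 * u) \<le> u * \<theta>" .
    with \<open>0 \<le> u\<close> show ?thesis
      by (simp add: field_simps)
  qed
  moreover have "2 * u - 2 * u\<^sup>2 \<le> ln (1 + 2 * u)"
    using ln_add_one_ge_sub_half_square[of "2 * u"] \<open>0 \<le> u\<close> by (simp add: power2_eq_square)
  ultimately have "chi2_chernoff_exponent \<theta> t (- u) \<le> - (u * \<theta>min * (1 - 2 * u)) - (u - u\<^sup>2) + u * t"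
    unfolding chi2_chernoff_exponent_def by simp
  also have "\<dots> = - (c\<^sup>2 / w) / 4"
  proof -
    have t: "t = (w + 1) / 2 - c" and \<theta>min: "\<theta>min = (w - 1) / 2"
      by (simp_all add: c_def w_def field_simps)
    show ?thesis
      using \<open>1 \<le> w\<close> unfolding u_def t \<theta>min by (simp add: field_simps power2_eq_square)
  qed
  finally show ?thesis
    using \<open>0 \<le> u\<close> unfolding c_def w_def by (intro exI[of _ "- u"]) simp
qed

theorem corollary1:
  fixes M :: "'a measure" and v :: "'a \<Rightarrow> nat \<Rightarrow> real"
    and g :: "nat \<Rightarrow> real" and P :: nat
    and \<nu> \<theta>min \<theta>max \<tau>1 \<tau>2 :: real
  assumes "prob_space M"
    and "P \<ge> 1" and "\<nu> > 0"
    and "prob_space.indep_vars M (\<lambda>_. borel) (\<lambda>p x. v x p) {..<P}"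
    and "\<And>p. p < P \<Longrightarrow> distributed M lborel (\<lambda>x. v x p) (normal_density 0 \<nu>)"
    and "0 \<le> \<theta>min"
    and "\<theta>min \<le> (\<Sum>p<P. (g p)\<^sup>2) / (real P * \<nu>\<^sup>2)"
    and "(\<Sum>p<P. (g p)\<^sup>2) / (real P * \<nu>\<^sup>2) \<le> \<theta>max"
    and "\<tau>1 \<ge> \<nu>\<^sup>2 * (1 + \<theta>max)"
    and "\<tau>2 \<le> \<nu>\<^sup>2 * (1 + \<theta>min)"
  shows "(measure M {x \<in> space M. (\<Sum>p<P. (g p + v x p)\<^sup>2) / real P \<ge> \<tau>1}
           \<le> exp (- (real P / 4) * (sqrt (2 * \<tau>1 / \<nu>\<^sup>2 - 1) - sqrt (1 + 2 * \<theta>max))\<^sup>2))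
         \<and> (measure M {x \<in> space M. (\<Sum>p<P. (g p + v x p)\<^sup>2) / real P \<le> \<tau>2}
           \<le> exp (- (real P / 4) * ((1 + \<theta>min - \<tau>2 / \<nu>\<^sup>2)\<^sup>2 / (1 + 2 * \<theta>min))))"
proof -
  interpret prob_space M by fact
  define \<theta>0 where "\<theta>0 = (\<Sum>p<P. (g p)\<^sup>2) / (real P * \<nu>\<^sup>2)"
  have "P > 0" and "0 \<le> \<theta>0"
    using assms(2,6,7) by (simp_all add: \<theta>0_def)
  obtain \<mu>1 where "0 \<le> \<mu>1" "\<mu>1 < 1/2" and bound1:
    "chi2_chernoff_exponent \<theta>0 (\<tau>1 / \<nu>\<^sup>2) \<mu>1 \<le> - (sqrt (2 * \<tau>1 / \<nu>\<^sup>2 - 1) - sqrt (1 + 2 * \<theta>max))\<^sup>2 / 4"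
    using chi2_chernoff_exponent_upper_bound[of \<theta>0 \<theta>max "\<tau>1 / \<nu>\<^sup>2"] \<open>0 \<le> \<theta>0\<close> assms(3,8,9)
    by (auto simp: \<theta>0_def field_simps)
  obtain \<mu>2 where "\<mu>2 \<le> 0" and bound2:
    "chi2_chernoff_exponent \<theta>0 (\<tau>2 / \<nu>\<^sup>2) \<mu>2 \<le> - ((1 + \<theta>min - \<tau>2 / \<nu>\<^sup>2)\<^sup>2 / (1 + 2 * \<theta>min)) / 4"
    using chi2_chernoff_exponent_lower_bound[of \<theta>min \<theta>0 "\<tau>2 / \<nu>\<^sup>2"] assms(3,6,7,10)
    by (auto simp: \<theta>0_def field_simps)
  have exp_bound: "exp (real P * e) \<le> exp (- (real P / 4) * r)" if "e \<le> - r / 4" for e r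
    using mult_left_mono[OF that, of "real P"] by simp
  have "measure M {x \<in> space M. (\<Sum>p<P. (g p + v x p)\<^sup>2) / real P \<ge> \<tau>1}
      \<le> exp (real P * chi2_chernoff_exponent \<theta>0 (\<tau>1 / \<nu>\<^sup>2) \<mu>1)"
    unfolding \<theta>0_def using assms(4,5,3) \<open>P > 0\<close> \<open>0 \<le> \<mu>1\<close> \<open>\<mu>1 < 1/2\<close>
    by (rule upper_tail_le_exp_chi2_chernoff_exponent)
  moreover have "measure M {x \<in> space M. (\<Sum>p<P. (g p + v x p)\<^sup>2) / real P \<le> \<tau>2}
      \<le> exp (real P * chi2_chernoff_exponent \<theta>0 (\<tau>2 / \<nu>\<^sup>2) \<mu>2)"
    unfolding \<theta>0_def using assms(4,5,3) \<open>P > 0\<close> \<open>\<mu>2 \<le> 0\<close>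
    by (rule lower_tail_le_exp_chi2_chernoff_exponent)
  ultimately show ?thesis
    using exp_bound[OF bound1] exp_bound[OF bound2] by linarith
qed

end
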